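(* Let $Y$ be a shift-invariant subspace of $\mathcal B_0$. Then the closure of $Y$ in $\mathcal B_0$ (with respect to $\|\cdot\|_{\mathcal B}$) equals $\mathcal B_0\cap\overline{Y}^{H^\infty}$, where $\overline Y^{H^\infty}$ is the closure of $Y$ in $H^\infty(\mathbb C_+)$ with the sup norm. Likewise, if $Z$ is a shift-invariant subspace of $\mathcal B$ containing the constant functions, then the closure of $Z$ in $\mathcal B$ equals $\mathcal B\cap\overline Z^{H^\infty}$.
   Context: $\mathbb C_+=\{z:\Re z>0\}$. $\mathcal B$ is the space of holomorphic $f$ on $\mathbb C_+$ with $\|f\|_{\mathcal B_0}:=\int_0^\infty\sup_{\beta\in\mathbb R}|f'(\alpha+i\beta)|\,d\alpha<\infty$; such $f$ are bounded, $f(\infty):=\lim_{\Re z\to\infty}f(z)$ exists; $\mathcal B$ is a Banach algebra with norm $\|f\|_{\mathcal B}=\|f\|_\infty+\|f\|_{\mathcal B_0}$, and $\mathcal B_0=\{f\in\mathcal B:f(\infty)=0\}$. A subspace $Y$ of $\mathcal B$ is shift-invariant if $T(a)Y\subset Y$ for all $a\ge0$, where $(T(a)f)(z)=f(z+a)$. *)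

theory Defs
  imports "HOL-Complex_Analysis.Complex_Analysis"
begin

text \<open>Functions on the right half-plane are represented as total functions
  complex \<Rightarrow> complex which vanish off the half-plane (canonical representatives).\<close>

definition RHP :: "complex set" where
  "RHP = {z. Re z > 0}"

definition on_RHP :: "(complex \<Rightarrow> complex) \<Rightarrow> bool" where
  "on_RHP f \<longleftrightarrow> f holomorphic_on RHP \<and> (\<forall>z. z \<notin> RHP \<longrightarrow> f z = 0)"

definition sup_norm :: "(complex \<Rightarrow> complex) \<Rightarrow> ennreal" where
  "sup_norm f = (SUP z\<in>RHP. ennreal (norm (f z)))"

definition B0_norm :: "(complex \<Rightarrow> complex) \<Rightarrow> ennreal" where
  "B0_norm f = (\<integral>\<^sup>+ \<alpha>. (SUP \<beta>::real. ennreal (norm (deriv f (Complex \<alpha> \<beta>))))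
                   * indicator {0<..} \<alpha> \<partial>lborel)"

definition B_norm :: "(complex \<Rightarrow> complex) \<Rightarrow> ennreal" where
  "B_norm f = sup_norm f + B0_norm f"

definition Hinf :: "(complex \<Rightarrow> complex) set" where
  "Hinf = {f. on_RHP f \<and> sup_norm f < \<infinity>}"

definition Bsp :: "(complex \<Rightarrow> complex) set" where
  "Bsp = {f. on_RHP f \<and> B0_norm f < \<infinity>}"

text \<open>f(\<infinity>) = 0 : limit as Re z \<rightarrow> \<infinity>.\<close>
definition B0sp :: "(complex \<Rightarrow> complex) set" where
  "B0sp = {f\<in>Bsp. (f \<longlongrightarrow> 0) (filtercomap Re at_top)}"

definition shift :: "real \<Rightarrow> (complex \<Rightarrow> complex) \<Rightarrow> (complex \<Rightarrow> complex)" where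
  "shift a f = (\<lambda>z. if Re z > 0 then f (z + of_real a) else 0)"

definition const_fun :: "complex \<Rightarrow> (complex \<Rightarrow> complex)" where
  "const_fun c = (\<lambda>z. if Re z > 0 then c else 0)"

definition is_subspace :: "(complex \<Rightarrow> complex) set \<Rightarrow> bool" where
  "is_subspace Y \<longleftrightarrow> (\<lambda>z. 0) \<in> Y \<and> (\<forall>f\<in>Y. \<forall>g\<in>Y. (\<lambda>z. f z + g z) \<in> Y)
      \<and> (\<forall>c. \<forall>f\<in>Y. (\<lambda>z. c * f z) \<in> Y)"

definition shift_invariant :: "(complex \<Rightarrow> complex) set \<Rightarrow> bool" where
  "shift_invariant Y \<longleftrightarrow> (\<forall>a\<ge>0. \<forall>f\<in>Y. shift a f \<in> Y)"

definition B_closure_in :: "(complex \<Rightarrow> complex) set \<Rightarrow> (complex \<Rightarrow> complex) set \<Rightarrow> (complex \<Rightarrow> complex) set" where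
  "B_closure_in S Y = {f\<in>S. \<forall>\<epsilon>>0. \<exists>g\<in>Y. B_norm (\<lambda>z. f z - g z) < ennreal \<epsilon>}"

definition Hinf_closure :: "(complex \<Rightarrow> complex) set \<Rightarrow> (complex \<Rightarrow> complex) set" where
  "Hinf_closure Y = {f\<in>Hinf. \<forall>\<epsilon>>0. \<exists>g\<in>Y. sup_norm (\<lambda>z. f z - g z) < ennreal \<epsilon>}"

end

theory Submission
  imports Defs
begin

text \<open>
  The B-closure lies in the sup-norm closure because the sup norm is part of the B norm.
  Conversely, let \<open>f\<close> be a sup-norm limit of \<open>Y\<close>, let \<open>T(a)\<close> denote the shift by \<open>a \<ge> 0\<close> and
  take \<open>0 < b \<le> A\<close>, \<open>g\<^sub>0 \<in> Y\<close> and \<open>h = f - g\<^sub>0\<close>. Then \<open>c + T(b) g\<^sub>0 - T(A) g\<^sub>0 \<in> Y\<close> differs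
  from \<open>f\<close> by \<open>(f - T(b) f) + (T(A) f - c) + (T(b) h - T(A) h)\<close>.
  The first term is B-small for small \<open>b\<close>: near the imaginary axis because the integral of
  \<open>sup\<^sub>\<beta> |f'(\<alpha> + i\<beta>)|\<close> over small \<open>\<alpha>\<close> is small, and elsewhere by the Cauchy estimates.
  The second is B-small for large \<open>A\<close>, since the tail of that integral bounds the oscillation
  of \<open>f\<close> on \<open>Re z > A\<close>, and \<open>c\<close> approximates \<open>f\<close> there (\<open>c = 0\<close> on \<open>\<B>\<^sub>0\<close>, \<open>c = f(w)\<close> when the
  constants lie in the subspace). Once \<open>b\<close> and \<open>A\<close> are fixed, the third is B-small when \<open>h\<close> is
  sup-small, because after a shift by \<open>b > 0\<close> the Cauchy estimates bound \<open>h'\<close> integrably.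
\<close>

lemma mem_RHP [simp]: "z \<in> RHP \<longleftrightarrow> 0 < Re z"
  by (simp add: RHP_def)

lemma open_RHP: "open RHP"
  by (simp add: RHP_def open_halfspace_Re_gt)

lemma field_differentiable_RHP:
  "f holomorphic_on RHP \<Longrightarrow> z \<in> RHP \<Longrightarrow> f field_differentiable (at z)"
  using holomorphic_on_imp_differentiable_at open_RHP by blast

lemma has_field_derivative_RHP:
  "f holomorphic_on RHP \<Longrightarrow> z \<in> RHP \<Longrightarrow> (f has_field_derivative deriv f z) (at z within T)"
  using holomorphic_derivI open_RHP by blast

lemma holomorphic_on_RHP_deriv: "f holomorphic_on RHP \<Longrightarrow> deriv f holomorphic_on RHP"
  using holomorphic_deriv open_RHP by blast

lemma holomorphic_on_RHP_shift:
  assumes "f holomorphic_on RHP" "0 \<le> a"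
  shows "(\<lambda>z. f (z + of_real a)) holomorphic_on RHP"
proof -
  have "f holomorphic_on (\<lambda>z. z + of_real a) ` RHP"
    using assms by (auto intro: holomorphic_on_subset)
  then have "(f \<circ> (\<lambda>z. z + of_real a)) holomorphic_on RHP"
    by (intro holomorphic_on_compose holomorphic_intros)
  then show ?thesis by (simp add: o_def)
qed

lemma deriv_RHP_shift:
  assumes "f holomorphic_on RHP" "0 \<le> a" "z \<in> RHP"
  shows "deriv (\<lambda>w. f (w + of_real a)) z = deriv f (z + of_real a)"
  using deriv_compose_linear'[of f 1 z "of_real a"] field_differentiable_RHP[OF assms(1)] assms(2,3)
  by simp

lemma deriv_eq_on_RHP:
  assumes "\<And>z. z \<in> RHP \<Longrightarrow> f z = g z" "z \<in> RHP"
  shows "deriv f z = deriv g z"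
proof (rule deriv_cong_ev)
  show "\<forall>\<^sub>F w in nhds z. f w = g w"
    using eventually_nhds_in_open[OF open_RHP assms(2)] by (rule eventually_mono) (use assms(1) in auto)
qed simp

lemma norm_higher_deriv_RHP_le:
  assumes hol: "f holomorphic_on RHP" and bound: "\<And>w. w \<in> RHP \<Longrightarrow> norm (f w) \<le> M"
    and z: "z \<in> RHP"
  shows "norm ((deriv ^^ n) f z) \<le> fact n * M / (Re z / 2) ^ n"
proof (rule Cauchy_inequality)
  have disc: "cball z (Re z / 2) \<subseteq> RHP"
  proof
    fix x assume "x \<in> cball z (Re z / 2)"
    then show "x \<in> RHP"
      using z abs_Re_le_cmod[of "z - x"] by (auto simp: dist_norm)
  qed
  show "f holomorphic_on ball z (Re z / 2)"
    using hol disc ball_subset_cball holomorphic_on_subset by blast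
  show "continuous_on (cball z (Re z / 2)) f"
    using holomorphic_on_imp_continuous_on[OF hol] disc continuous_on_subset by blast
  show "0 < Re z / 2" using z by simp
  show "norm (f x) \<le> M" if "norm (z - x) = Re z / 2" for x
  proof -
    have "x \<in> cball z (Re z / 2)" using that by (simp add: dist_norm)
    then show ?thesis using disc bound by blast
  qed
qed

lemma norm_diff_le_Re_ge:
  assumes hol: "g holomorphic_on RHP" and m: "0 < m"
    and bound: "\<And>u. m \<le> Re u \<Longrightarrow> norm (deriv g u) \<le> L"
    and p: "m \<le> Re p" and q: "m \<le> Re q"
  shows "norm (g p - g q) \<le> L * norm (p - q)"
proof -
  have seg: "closed_segment p q \<subseteq> {u. m \<le> Re u}"
    using p q by (intro closed_segment_subset convex_halfspace_Re_ge) auto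
  show ?thesis
  proof (rule field_differentiable_bound[of "closed_segment p q" g "deriv g"])
    fix u assume "u \<in> closed_segment p q"
    then have "m \<le> Re u" using seg by auto
    then show "(g has_field_derivative deriv g u) (at u within closed_segment p q)"
      and "norm (deriv g u) \<le> L"
      using m bound by (auto intro: has_field_derivative_RHP[OF hol])
  qed auto
qed

lemma norm_diff_le_bounded:
  assumes hol: "h holomorphic_on RHP" and bound: "\<And>w. w \<in> RHP \<Longrightarrow> norm (h w) \<le> M"
    and m: "0 < m" "m \<le> Re p" "m \<le> Re q"
  shows "norm (h p - h q) \<le> 2 * M / m * norm (p - q)"
proof (rule norm_diff_le_Re_ge[OF hol m(1) _ m(2,3)])
  fix u assume u: "m \<le> Re u"
  have "M \<ge> 0" using bound[of u] u m by (meson norm_ge_zero order_trans mem_RHP less_le_trans)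
  have "norm (deriv h u) \<le> 2 * M / Re u"
    using norm_higher_deriv_RHP_le[OF hol bound, of u 1] u m by (simp add: mult.commute)
  also have "\<dots> \<le> 2 * M / m"
    using u m \<open>M \<ge> 0\<close> by (intro divide_left_mono) auto
  finally show "norm (deriv h u) \<le> 2 * M / m" .
qed

lemma norm_deriv_diff_le_bounded:
  assumes hol: "h holomorphic_on RHP" and bound: "\<And>w. w \<in> RHP \<Longrightarrow> norm (h w) \<le> M"
    and m: "0 < m" "m \<le> Re p" "m \<le> Re q"
  shows "norm (deriv h p - deriv h q) \<le> 8 * M / m\<^sup>2 * norm (p - q)"
proof (rule norm_diff_le_Re_ge[OF holomorphic_on_RHP_deriv[OF hol] m(1) _ m(2,3)])
  fix u assume u: "m \<le> Re u"
  have "M \<ge> 0" using bound[of u] u m by (meson norm_ge_zero order_trans mem_RHP less_le_trans)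
  have "norm (deriv (deriv h) u) \<le> 8 * M / (Re u)\<^sup>2"
    using norm_higher_deriv_RHP_le[OF hol bound, of u 2] u m
    by (simp add: numeral_2_eq_2 power2_eq_square field_simps)
  also have "\<dots> \<le> 8 * M / m\<^sup>2"
    using u m \<open>M \<ge> 0\<close> by (intro divide_left_mono power_mono mult_pos_pos) auto
  finally show "norm (deriv (deriv h) u) \<le> 8 * M / m\<^sup>2" .
qed

definition deriv_sup :: "(complex \<Rightarrow> complex) \<Rightarrow> real \<Rightarrow> ennreal" where
  "deriv_sup f \<alpha> = (SUP \<beta>. ennreal (norm (deriv f (Complex \<alpha> \<beta>))))"

definition deriv_sup_integral :: "(complex \<Rightarrow> complex) \<Rightarrow> real set \<Rightarrow> ennreal" where
  "deriv_sup_integral f S = (\<integral>\<^sup>+ t. deriv_sup f t * indicator S t \<partial>lborel)"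

lemma B0_norm_eq_deriv_sup_integral: "B0_norm f = deriv_sup_integral f {0<..}"
  by (simp add: B0_norm_def deriv_sup_integral_def deriv_sup_def)

lemma norm_deriv_le_deriv_sup: "ennreal (norm (deriv f z)) \<le> deriv_sup f (Re z)"
  unfolding deriv_sup_def by (rule SUP_upper2[of "Im z"]) simp_all

lemma deriv_sup_le:
  "(\<And>\<beta>. norm (deriv f (Complex \<alpha> \<beta>)) \<le> C) \<Longrightarrow> deriv_sup f \<alpha> \<le> ennreal C"
  unfolding deriv_sup_def by (intro SUP_least ennreal_leI)

lemma deriv_sup_integral_mono:
  "S \<subseteq> T \<Longrightarrow> deriv_sup_integral f S \<le> deriv_sup_integral f T"
  unfolding deriv_sup_integral_def
  by (intro nn_integral_mono mult_left_mono) (auto simp: indicator_def)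

lemma deriv_sup_shift:
  assumes hol: "f holomorphic_on RHP" and "0 \<le> a" "0 < \<alpha>"
  shows "deriv_sup (\<lambda>z. f (z + of_real a)) \<alpha> = deriv_sup f (\<alpha> + a)"
proof -
  have "Complex \<alpha> \<beta> + of_real a = Complex (\<alpha> + a) \<beta>" for \<beta>
    by (simp add: complex_eq_iff)
  then have "deriv (\<lambda>z. f (z + of_real a)) (Complex \<alpha> \<beta>) = deriv f (Complex (\<alpha> + a) \<beta>)" for \<beta>
    using deriv_RHP_shift[OF hol, of a "Complex \<alpha> \<beta>"] assms by simp
  then show ?thesis by (simp add: deriv_sup_def)
qed

lemma continuous_on_deriv_horizontal:
  assumes hol: "f holomorphic_on RHP"
  shows "continuous_on {0<..} (\<lambda>\<alpha>. deriv f (Complex \<alpha> \<beta>))"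
proof (rule continuous_on_compose2[of RHP "deriv f"])
  show "continuous_on RHP (deriv f)"
    by (rule holomorphic_on_imp_continuous_on[OF holomorphic_on_RHP_deriv[OF hol]])
qed (auto intro!: continuous_intros continuous_on_Complex)

text \<open>By continuity of \<open>f'\<close> the supremum over a vertical line may be taken over rational
  ordinates, which makes \<open>deriv_sup f\<close> a countable supremum of Borel functions.\<close>
lemma deriv_sup_eq_SUP_Rats:
  assumes hol: "f holomorphic_on RHP" and \<alpha>: "0 < \<alpha>"
  shows "deriv_sup f \<alpha> = (SUP q\<in>\<rat>. ennreal (norm (deriv f (Complex \<alpha> q))))"
    (is "_ = ?S")
proof (rule antisym)
  show "?S \<le> deriv_sup f \<alpha>"
    unfolding deriv_sup_def by (rule SUP_mono) auto
  show "deriv_sup f \<alpha> \<le> ?S"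
    unfolding deriv_sup_def
  proof (rule SUP_least, rule ennreal_le_epsilon)
    fix \<beta> e :: real assume e: "0 < e"
    let ?g = "\<lambda>y. deriv f (Complex \<alpha> y)"
    have "isCont (deriv f) (Complex \<alpha> \<beta>)"
      using holomorphic_on_imp_continuous_on[OF holomorphic_on_RHP_deriv[OF hol]] \<alpha>
      by (simp add: continuous_on_eq_continuous_at[OF open_RHP])
    moreover have "isCont (\<lambda>y. Complex \<alpha> y) \<beta>"
      using continuous_on_Complex[of UNIV "\<lambda>_. \<alpha>" "\<lambda>y. y"]
      by (simp add: continuous_on_eq_continuous_at)
    ultimately have "isCont ?g \<beta>" by (rule isCont_o2[rotated])
    then obtain d where d: "0 < d" "\<And>y. dist y \<beta> < d \<Longrightarrow> dist (?g y) (?g \<beta>) < e"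
      using e by (auto simp: continuous_at_eps_delta)
    obtain q where q: "q \<in> \<rat>" "\<beta> < q" "q < \<beta> + d"
      using Rats_dense_in_real[of \<beta> "\<beta> + d"] d(1) by auto
    have "norm (?g \<beta>) \<le> norm (?g q) + e"
      using d(2)[of q] q norm_triangle_ineq3[of "?g q" "?g \<beta>"]
      by (simp add: dist_norm norm_minus_commute)
    then have "ennreal (norm (?g \<beta>)) \<le> ennreal (norm (?g q)) + ennreal e"
      using e by (simp add: ennreal_plus[symmetric] ennreal_leI del: ennreal_plus)
    also have "\<dots> \<le> ?S + ennreal e"
      using q by (intro add_mono SUP_upper) auto
    finally show "ennreal (norm (?g \<beta>)) \<le> ?S + ennreal e" .
  qed
qed

lemma borel_measurable_deriv_sup_indicator:
  assumes hol: "f holomorphic_on RHP" and S: "S \<subseteq> {0<..}" "S \<in> sets borel"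
  shows "(\<lambda>t. deriv_sup f t * indicator S t) \<in> borel_measurable borel"
proof -
  have eq: "deriv_sup f t * indicator S t =
      (SUP q\<in>\<rat>. ennreal (norm (indicator {0<..} t *\<^sub>R deriv f (Complex t q)))) * indicator S t"
    for t
    using deriv_sup_eq_SUP_Rats[OF hol, of t] S(1) by (cases "t \<in> S") auto
  have "(\<lambda>t. indicator {0<..} t *\<^sub>R deriv f (Complex t q)) \<in> borel_measurable borel" for q
    by (intro borel_measurable_continuous_on_indicator continuous_on_deriv_horizontal[OF hol]) auto
  then have "(\<lambda>t. ennreal (norm (indicator {0<..} t *\<^sub>R deriv f (Complex t q))))
      \<in> borel_measurable borel" for q
    by measurable
  then show ?thesis
    unfolding eq using S(2) by (intro borel_measurable_times_ennreal borel_measurable_SUP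
        countable_rat borel_measurable_indicator) auto
qed

lemma nn_integral_lborel_translate:
  fixes F :: "real \<Rightarrow> ennreal"
  assumes [measurable]: "F \<in> borel_measurable borel"
  shows "(\<integral>\<^sup>+ x. F (x + a) \<partial>lborel) = (\<integral>\<^sup>+ x. F x \<partial>lborel)"
  using nn_integral_real_affine[OF assms, of 1 a] by (simp add: add.commute)

lemma B0_norm_shift:
  assumes hol: "f holomorphic_on RHP" and a: "0 \<le> a"
  shows "B0_norm (\<lambda>z. f (z + of_real a)) = deriv_sup_integral f {a<..}"
proof -
  define G where "G t = deriv_sup f t * indicator {a<..} t" for t
  have "G \<in> borel_measurable borel"
    unfolding G_def using a by (intro borel_measurable_deriv_sup_indicator[OF hol]) auto
  moreover have "deriv_sup (\<lambda>z. f (z + of_real a)) \<alpha> * indicator {0<..} \<alpha> = G (\<alpha> + a)" for \<alpha>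
    using deriv_sup_shift[OF hol a, of \<alpha>] by (cases "0 < \<alpha>") (auto simp: G_def)
  ultimately show ?thesis
    by (simp add: B0_norm_eq_deriv_sup_integral deriv_sup_integral_def nn_integral_lborel_translate
        flip: G_def)
qed

lemma norm_diff_horizontal_le:
  assumes hol: "f holomorphic_on RHP" and r: "0 < r" "r \<le> s"
  shows "ennreal (norm (f (Complex s \<beta>) - f (Complex r \<beta>))) \<le> deriv_sup_integral f {r..s}"
proof -
  define \<gamma> where "\<gamma> = (\<lambda>t. f (Complex t \<beta>))"
  define \<gamma>' where "\<gamma>' = (\<lambda>t. deriv f (Complex t \<beta>))"
  have line: "(\<lambda>t. Complex t \<beta>) = (\<lambda>t. of_real t + \<i> * of_real \<beta>)"
    by (auto simp: complex_eq_iff)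
  have "(\<gamma> has_vector_derivative \<gamma>' t) (at t within {r..s})" if "t \<in> {r..s}" for t
  proof -
    have "((\<lambda>t. Complex t \<beta>) has_vector_derivative 1) (at t within {r..s})"
      unfolding line by (auto intro!: derivative_eq_intros)
    moreover have "(f has_field_derivative \<gamma>' t) (at (Complex t \<beta>) within (\<lambda>t. Complex t \<beta>) ` {r..s})"
      unfolding \<gamma>'_def using has_field_derivative_RHP[OF hol] that r by simp
    ultimately have "((f \<circ> (\<lambda>t. Complex t \<beta>)) has_vector_derivative 1 * \<gamma>' t) (at t within {r..s})"
      by (rule field_vector_diff_chain_within)
    then show ?thesis by (simp add: \<gamma>_def o_def)
  qed
  then have ftc: "(\<gamma>' has_integral (\<gamma> s - \<gamma> r)) {r..s}"
    using r by (intro fundamental_theorem_of_calculus) auto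
  have "continuous_on {r..s} \<gamma>'"
    unfolding \<gamma>'_def using r
    by (intro continuous_on_subset[OF continuous_on_deriv_horizontal[OF hol]]) auto
  then have int: "(\<lambda>t. norm (\<gamma>' t)) integrable_on {r..s}"
    by (intro integrable_continuous_interval continuous_intros)
  have "norm (\<gamma> s - \<gamma> r) \<le> integral {r..s} (\<lambda>t. norm (\<gamma>' t))"
    using integral_norm_bound_integral[OF has_integral_integrable[OF ftc] int] ftc
    by (simp add: integral_unique)
  then have "ennreal (norm (\<gamma> s - \<gamma> r)) \<le> ennreal (integral {r..s} (\<lambda>t. norm (\<gamma>' t)))"
    by (rule ennreal_leI)
  also have "\<dots> = (\<integral>\<^sup>+ t. ennreal (norm (\<gamma>' t)) * indicator {r..s} t \<partial>lborel)"
    by (rule nn_integral_has_integral_lebesgue'[symmetric]) (auto intro: integrable_integral[OF int])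
  also have "\<dots> \<le> deriv_sup_integral f {r..s}"
    unfolding deriv_sup_integral_def \<gamma>'_def
    using norm_deriv_le_deriv_sup[of f "Complex _ \<beta>"]
    by (intro nn_integral_mono mult_right_mono) auto
  finally show ?thesis by (simp add: \<gamma>_def)
qed

lemma nn_integral_indicator_decseq_small:
  fixes F :: "'a \<Rightarrow> ennreal"
  assumes F: "F \<in> borel_measurable M" "integral\<^sup>N M F < \<infinity>"
    and S: "decseq S" "\<And>n. S n \<in> sets M" "\<And>x. \<exists>n. x \<notin> S n" and e: "0 < e"
  shows "\<exists>n. (\<integral>\<^sup>+ x. F x * indicator (S n) x \<partial>M) < e"
proof -
  define G where "G = (\<lambda>n x. F x * indicator (S n) x)"
  have "decseq G"
  proof (intro decseq_SucI le_funI)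
    fix n x
    have "S (Suc n) \<subseteq> S n" using S(1) by (rule decseq_SucD)
    then show "G (Suc n) x \<le> G n x" by (auto simp: G_def split: split_indicator)
  qed
  moreover have "G n \<in> borel_measurable M" for n
    unfolding G_def using F(1) S(2) by measurable
  moreover have "integral\<^sup>N M (G n) < \<infinity>" for n
  proof -
    have "integral\<^sup>N M (G n) \<le> integral\<^sup>N M F"
      by (intro nn_integral_mono) (simp add: G_def mult_left_le split: split_indicator)
    then show ?thesis using F(2) by simp
  qed
  ultimately have "(\<integral>\<^sup>+ x. (INF n. G n x) \<partial>M) = (INF n. integral\<^sup>N M (G n))"
    by (rule nn_integral_monotone_convergence_INF_decseq)
  moreover have "(INF n. G n x) = 0" for x
  proof -
    obtain n where "x \<notin> S n" using S(3) by blast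
    then have "(INF n. G n x) \<le> 0" using INF_lower[of n UNIV "\<lambda>n. G n x"] by (simp add: G_def)
    then show ?thesis by simp
  qed
  ultimately have "(INF n. integral\<^sup>N M (G n)) < e" using e by simp
  then show ?thesis by (auto simp: INF_less_iff G_def)
qed

lemma deriv_sup_integral_decseq_small:
  assumes hol: "f holomorphic_on RHP" and fin: "B0_norm f < \<infinity>"
    and S: "decseq S" "\<And>n. S n \<in> sets borel" "\<And>n. S n \<subseteq> {0<..}" "\<And>x. \<exists>n. x \<notin> S n"
    and e: "0 < e"
  shows "\<exists>n. deriv_sup_integral f (S n) < e"
proof -
  define F where "F = (\<lambda>t. deriv_sup f t * indicator {0<..} t)"
  have "F \<in> borel_measurable lborel"
    unfolding F_def by (simp add: borel_measurable_deriv_sup_indicator[OF hol])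
  moreover have "integral\<^sup>N lborel F < \<infinity>"
    using fin unfolding F_def by (simp add: B0_norm_eq_deriv_sup_integral deriv_sup_integral_def)
  ultimately obtain n where "(\<integral>\<^sup>+ t. F t * indicator (S n) t \<partial>lborel) < e"
    using nn_integral_indicator_decseq_small[of F lborel S e] S e by (simp, blast)
  moreover have "F t * indicator (S n) t = deriv_sup f t * indicator (S n) t" for t
    using S(3)[of n] by (auto simp: F_def split: split_indicator)
  ultimately show ?thesis by (auto simp: deriv_sup_integral_def)
qed

lemma deriv_sup_integral_tail_small:
  assumes hol: "f holomorphic_on RHP" and fin: "B0_norm f < \<infinity>" and e: "0 < e"
  shows "\<exists>A\<ge>A0. deriv_sup_integral f {A<..} < e"
proof -
  have "\<exists>n. deriv_sup_integral f {max A0 0 + real n<..} < e"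
  proof (rule deriv_sup_integral_decseq_small[OF hol fin _ _ _ _ e])
    show "\<exists>n. x \<notin> {max A0 0 + real n<..}" for x
      using reals_Archimedean2[of "x - max A0 0"] by (auto simp: not_less algebra_simps intro: less_imp_le)
    show "decseq (\<lambda>n. {max A0 0 + real n<..})"
      by (intro decseq_SucI) auto
  qed auto
  then obtain n where "deriv_sup_integral f {max A0 0 + real n<..} < e" ..
  then show ?thesis by (intro exI[of _ "max A0 0 + real n"]) auto
qed

lemma deriv_sup_integral_initial_small:
  assumes hol: "f holomorphic_on RHP" and fin: "B0_norm f < \<infinity>" and e: "0 < e"
  shows "\<exists>d>0. deriv_sup_integral f {0<..<d} < e"
proof -
  have "\<exists>n. deriv_sup_integral f {0<..<1 / Suc n} < e"
  proof (rule deriv_sup_integral_decseq_small[OF hol fin _ _ _ _ e])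
    show "decseq (\<lambda>n. {0<..<1 / real (Suc n)})"
    proof (intro decseq_SucI subsetI)
      fix n x assume "x \<in> {0<..<1 / real (Suc (Suc n))}"
      moreover have "1 / real (Suc (Suc n)) \<le> 1 / real (Suc n)" by (intro divide_left_mono) auto
      ultimately show "x \<in> {0<..<1 / real (Suc n)}" by auto
    qed
    show "\<exists>n. x \<notin> {0<..<1 / real (Suc n)}" for x
    proof (cases "0 < x")
      case True
      then obtain n :: nat where "1 / x < n" using reals_Archimedean2 by blast
      then show ?thesis using True by (intro exI[of _ n]) (auto simp: field_simps)
    qed auto
  qed auto
  then obtain n where "deriv_sup_integral f {0<..<1 / Suc n} < e" ..
  then show ?thesis by (intro exI[of _ "1 / Suc n"]) auto
qed

lemma exists_deriv_sup_less:
  assumes fin: "B0_norm f < \<infinity>" and \<eta>: "0 < \<eta>"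
  shows "\<exists>T\<ge>T0. deriv_sup f T < ennreal \<eta>"
proof (rule ccontr)
  assume "\<not> ?thesis"
  then have large: "ennreal \<eta> \<le> deriv_sup f T" if "T0 \<le> T" for T
    using that by (auto simp: not_less)
  obtain x where x: "B0_norm f = ennreal x" "0 \<le> x"
    using fin by (cases "B0_norm f" rule: ennreal_cases) auto
  obtain n :: nat where n: "x / \<eta> < n" using reals_Archimedean2 by blast
  define T1 where "T1 = max T0 1"
  have "ennreal (\<eta> * n) = (\<integral>\<^sup>+ t. ennreal \<eta> * indicator {T1..T1 + n} t \<partial>lborel)"
    using \<eta> by (simp add: nn_integral_cmult_indicator ennreal_mult)
  also have "\<dots> \<le> B0_norm f"
    unfolding B0_norm_eq_deriv_sup_integral deriv_sup_integral_def
    by (intro nn_integral_mono) (auto simp: indicator_def T1_def intro!: large)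
  finally have "\<eta> * n \<le> x" using x \<eta> by (simp add: ennreal_le_iff)
  then show False using n \<eta> by (simp add: field_simps)
qed

lemma norm_diff_vertical_le:
  assumes hol: "f holomorphic_on RHP" and T: "0 < T" and L: "0 \<le> L" "deriv_sup f T \<le> ennreal L"
  shows "norm (f (Complex T y1) - f (Complex T y2)) \<le> L * \<bar>y1 - y2\<bar>"
proof -
  let ?I = "closed_segment (Complex T y1) (Complex T y2)"
  have "norm (f (Complex T y1) - f (Complex T y2)) \<le> L * norm (Complex T y1 - Complex T y2)"
  proof (rule field_differentiable_bound[of ?I f "deriv f"])
    fix u assume "u \<in> ?I"
    then have u: "Re u = T" by (simp add: closed_segment_same_Re)
    then show "(f has_field_derivative deriv f u) (at u within ?I)"
      using T by (intro has_field_derivative_RHP[OF hol]) auto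
    have "ennreal (norm (deriv f u)) \<le> ennreal L"
      using norm_deriv_le_deriv_sup[of f u] u L(2) by simp
    then show "norm (deriv f u) \<le> L" using L(1) by (simp add: ennreal_le_iff)
  qed (use L in auto)
  then show ?thesis by (simp add: norm_complex_def)
qed

text \<open>Move both points far to the right along horizontal segments, where \<open>f'\<close> is controlled by
  the tail of \<open>B0_norm f\<close>, and join them by a vertical segment on which \<open>|f'|\<close> is arbitrarily
  small.\<close>
lemma norm_diff_le_tail:
  assumes hol: "f holomorphic_on RHP" and fin: "B0_norm f < \<infinity>"
    and a: "0 \<le> a" "a < Re z" "a < Re w"
  shows "ennreal (norm (f z - f w)) \<le> 2 * deriv_sup_integral f {a<..}"
proof (rule ennreal_le_epsilon)
  fix e :: real assume e: "0 < e"
  define D where "D = \<bar>Im z - Im w\<bar> + 1"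
  have D: "0 < D" by (simp add: D_def)
  obtain T where T: "max (Re z) (Re w) \<le> T" "deriv_sup f T < ennreal (e / D)"
    using exists_deriv_sup_less[OF fin divide_pos_pos[OF e D], of "max (Re z) (Re w)"] by auto
  define p q where "p = Complex T (Im z)" and "q = Complex T (Im w)"
  have horizontal: "ennreal (norm (f (Complex T (Im u)) - f u)) \<le> deriv_sup_integral f {a<..}"
    if "u = z \<or> u = w" for u
  proof -
    have "ennreal (norm (f (Complex T (Im u)) - f (Complex (Re u) (Im u))))
        \<le> deriv_sup_integral f {Re u..T}"
      using that a T by (intro norm_diff_horizontal_le[OF hol]) auto
    also have "\<dots> \<le> deriv_sup_integral f {a<..}"
      using that a by (intro deriv_sup_integral_mono) auto
    finally show ?thesis by simp
  qed
  have "norm (f p - f q) \<le> e / D * \<bar>Im z - Im w\<bar>"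
    unfolding p_def q_def using T a e D by (intro norm_diff_vertical_le[OF hol]) auto
  also have "\<dots> \<le> e" using e D by (simp add: D_def field_simps)
  finally have vertical: "norm (f p - f q) \<le> e" .
  have "f z - f w = (f p - f q) + (f q - f w) - (f p - f z)" by simp
  then have "norm (f z - f w) \<le> norm (f p - f q) + norm (f q - f w) + norm (f p - f z)"
    by (metis norm_triangle_ineq norm_triangle_ineq4 add_right_mono order_trans)
  then have "ennreal (norm (f z - f w)) \<le> ennreal (norm (f p - f z)) + ennreal (norm (f q - f w)) + ennreal e"
    using vertical e by (simp add: ennreal_plus[symmetric] ennreal_leI del: ennreal_plus)
  also have "\<dots> \<le> deriv_sup_integral f {a<..} + deriv_sup_integral f {a<..} + ennreal e"
    using horizontal[of z] horizontal[of w] by (intro add_mono) (auto simp: p_def q_def)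
  finally show "ennreal (norm (f z - f w)) \<le> 2 * deriv_sup_integral f {a<..} + ennreal e"
    by (simp add: mult_2)
qed

lemma B0_norm_finite_imp_bounded:
  assumes hol: "f holomorphic_on RHP" and fin: "B0_norm f < \<infinity>"
  shows "\<exists>M. \<forall>w\<in>RHP. norm (f w) \<le> M"
proof -
  obtain x where x: "B0_norm f = ennreal x" "0 \<le> x"
    using fin by (cases "B0_norm f" rule: ennreal_cases) auto
  have "norm (f w) \<le> norm (f 1) + 2 * x" if "w \<in> RHP" for w
  proof -
    have "ennreal (norm (f w - f 1)) \<le> 2 * deriv_sup_integral f {0<..}"
      using norm_diff_le_tail[OF hol fin, of 0 w 1] that by simp
    also have "\<dots> = ennreal (2 * x)"
      using x by (simp add: B0_norm_eq_deriv_sup_integral ennreal_mult)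
    finally have "norm (f w - f 1) \<le> 2 * x" using x by (simp add: ennreal_le_iff)
    then show ?thesis using norm_triangle_ineq2[of "f w" "f 1"] by linarith
  qed
  then show ?thesis by blast
qed

lemma sup_norm_le: "(\<And>z. z \<in> RHP \<Longrightarrow> norm (u z) \<le> M) \<Longrightarrow> sup_norm u \<le> ennreal M"
  unfolding sup_norm_def by (intro SUP_least ennreal_leI)

lemma norm_le_if_sup_norm_less: "sup_norm u < ennreal e \<Longrightarrow> z \<in> RHP \<Longrightarrow> norm (u z) \<le> e"
proof -
  assume "sup_norm u < ennreal e" "z \<in> RHP"
  then have "ennreal (norm (u z)) < ennreal e"
    unfolding sup_norm_def by (meson SUP_upper le_less_trans)
  then show ?thesis by (simp add: ennreal_less_iff)
qed

lemma Bsp_subset_Hinf: "Bsp \<subseteq> Hinf"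
proof
  fix f assume "f \<in> Bsp"
  then have f: "on_RHP f" "B0_norm f < \<infinity>" by (auto simp: Bsp_def)
  then obtain M where "\<forall>w\<in>RHP. norm (f w) \<le> M"
    using B0_norm_finite_imp_bounded[of f] by (auto simp: on_RHP_def)
  then have "sup_norm f \<le> ennreal M" by (intro sup_norm_le) auto
  then have "sup_norm f < \<infinity>" using le_less_trans by fastforce
  then show "f \<in> Hinf" using f by (simp add: Hinf_def)
qed

lemma B0_norm_le_nn_integral:
  assumes "\<And>\<alpha>. 0 < \<alpha> \<Longrightarrow> deriv_sup u \<alpha> \<le> G \<alpha>"
  shows "B0_norm u \<le> (\<integral>\<^sup>+ \<alpha>. G \<alpha> * indicator {0<..} \<alpha> \<partial>lborel)"
  unfolding B0_norm_eq_deriv_sup_integral deriv_sup_integral_def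
  using assms by (intro nn_integral_mono) (simp split: split_indicator)

lemma B0_norm_cong_deriv:
  assumes "\<And>z. z \<in> RHP \<Longrightarrow> deriv u z = deriv v z"
  shows "B0_norm u = B0_norm v"
proof -
  have "deriv_sup u \<alpha> * indicator {0<..} \<alpha> = deriv_sup v \<alpha> * indicator {0<..} \<alpha>" for \<alpha>
    using assms by (cases "0 < \<alpha>") (simp_all add: deriv_sup_def)
  then show ?thesis by (simp add: B0_norm_eq_deriv_sup_integral deriv_sup_integral_def)
qed

lemma sup_norm_add_le:
  assumes "\<And>z. z \<in> RHP \<Longrightarrow> w z = u z + v z"
  shows "sup_norm w \<le> sup_norm u + sup_norm v"
  unfolding sup_norm_def
proof (rule SUP_least)
  fix z assume z: "z \<in> RHP"
  have "ennreal (norm (w z)) \<le> ennreal (norm (u z)) + ennreal (norm (v z))"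
    using assms[OF z] norm_triangle_ineq[of "u z" "v z"]
    by (simp add: ennreal_plus[symmetric] ennreal_leI del: ennreal_plus)
  also have "\<dots> \<le> (SUP z\<in>RHP. ennreal (norm (u z))) + (SUP z\<in>RHP. ennreal (norm (v z)))"
    using z by (intro add_mono SUP_upper)
  finally show "ennreal (norm (w z)) \<le> \<dots>" .
qed

lemma B0_norm_add_le:
  assumes hol: "u holomorphic_on RHP" "v holomorphic_on RHP"
    and w: "\<And>z. z \<in> RHP \<Longrightarrow> w z = u z + v z"
  shows "B0_norm w \<le> B0_norm u + B0_norm v"
proof -
  have "deriv_sup w \<alpha> \<le> deriv_sup u \<alpha> + deriv_sup v \<alpha>" if "0 < \<alpha>" for \<alpha>
    unfolding deriv_sup_def
  proof (rule SUP_least)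
    fix \<beta>
    let ?z = "Complex \<alpha> \<beta>"
    have "deriv w ?z = deriv (\<lambda>z. u z + v z) ?z"
      using that by (intro deriv_eq_on_RHP w) auto
    also have "\<dots> = deriv u ?z + deriv v ?z"
      using that by (intro deriv_add field_differentiable_RHP hol) auto
    finally have "ennreal (norm (deriv w ?z)) \<le> ennreal (norm (deriv u ?z)) + ennreal (norm (deriv v ?z))"
      using norm_triangle_ineq[of "deriv u ?z" "deriv v ?z"]
      by (simp add: ennreal_plus[symmetric] ennreal_leI del: ennreal_plus)
    then show "ennreal (norm (deriv w ?z)) \<le> (SUP \<beta>. ennreal (norm (deriv u (Complex \<alpha> \<beta>))))
        + (SUP \<beta>. ennreal (norm (deriv v (Complex \<alpha> \<beta>))))"
      by (rule order_trans) (intro add_mono SUP_upper; simp)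
  qed
  then have "B0_norm w \<le> (\<integral>\<^sup>+ \<alpha>. (deriv_sup u \<alpha> + deriv_sup v \<alpha>) * indicator {0<..} \<alpha> \<partial>lborel)"
    by (rule B0_norm_le_nn_integral)
  also have "\<dots> = B0_norm u + B0_norm v"
    using borel_measurable_deriv_sup_indicator[OF hol(1), of "{0<..}"]
      borel_measurable_deriv_sup_indicator[OF hol(2), of "{0<..}"]
    by (simp add: B0_norm_eq_deriv_sup_integral deriv_sup_integral_def distrib_right nn_integral_add)
  finally show ?thesis .
qed

lemma B_norm_add_le:
  assumes "u holomorphic_on RHP" "v holomorphic_on RHP" "\<And>z. z \<in> RHP \<Longrightarrow> w z = u z + v z"
  shows "B_norm w \<le> B_norm u + B_norm v"
  using add_mono[OF sup_norm_add_le[OF assms(3)] B0_norm_add_le[OF assms]]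
  by (simp add: B_norm_def ac_simps)

lemma nn_integral_inverse_square:
  assumes b: "0 < b" and C: "0 \<le> C"
  shows "(\<integral>\<^sup>+ t. ennreal (C / t\<^sup>2) * indicator {b..} t \<partial>lborel) = ennreal (C / b)"
proof -
  have "((\<lambda>t. 1 / t ^ 2) has_integral 1 / b) {b..}"
    using has_integral_inverse_power_to_inf[of 2 b] b by simp
  then have "((\<lambda>t. C / t\<^sup>2) has_integral C / b) {b..}"
    using has_integral_mult_right[of "\<lambda>t. 1 / t ^ 2" "1 / b" "{b..}" C] by simp
  then show ?thesis using C by (intro nn_integral_has_integral_lebesgue') auto
qed

lemma nn_integral_inverse_square_shift:
  assumes b: "0 < b" and C: "0 \<le> C"
  shows "(\<integral>\<^sup>+ \<alpha>. ennreal (C / (\<alpha> + b)\<^sup>2) * indicator {0<..} \<alpha> \<partial>lborel) \<le> ennreal (C / b)"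
proof -
  define F where "F = (\<lambda>t::real. ennreal (C / t\<^sup>2) * indicator {b..} t)"
  have F: "F \<in> borel_measurable borel" unfolding F_def by measurable
  have "(\<integral>\<^sup>+ \<alpha>. ennreal (C / (\<alpha> + b)\<^sup>2) * indicator {0<..} \<alpha> \<partial>lborel) \<le> (\<integral>\<^sup>+ \<alpha>. F (\<alpha> + b) \<partial>lborel)"
    unfolding F_def by (intro nn_integral_mono) (simp split: split_indicator)
  also have "\<dots> = (\<integral>\<^sup>+ t. F t \<partial>lborel)" by (rule nn_integral_lborel_translate[OF F])
  also have "\<dots> = ennreal (C / b)" unfolding F_def by (rule nn_integral_inverse_square[OF b C])
  finally show ?thesis .
qed

lemma B_norm_shift_sub_const_le:
  assumes hol: "f holomorphic_on RHP" and fin: "B0_norm f < \<infinity>" and A: "0 \<le> A" "A < Re w"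
  shows "B_norm (\<lambda>z. f (z + of_real A) - c)
    \<le> 3 * deriv_sup_integral f {A<..} + ennreal (norm (f w - c))"
proof -
  let ?u = "\<lambda>z. f (z + of_real A) - c"
  have sup: "sup_norm ?u \<le> 2 * deriv_sup_integral f {A<..} + ennreal (norm (f w - c))"
    unfolding sup_norm_def
  proof (rule SUP_least)
    fix z assume z: "z \<in> RHP"
    have "ennreal (norm (?u z)) \<le> ennreal (norm (f (z + of_real A) - f w)) + ennreal (norm (f w - c))"
      using norm_triangle_ineq[of "f (z + of_real A) - f w" "f w - c"]
      by (simp add: ennreal_plus[symmetric] ennreal_leI del: ennreal_plus)
    also have "\<dots> \<le> 2 * deriv_sup_integral f {A<..} + ennreal (norm (f w - c))"
    proof (rule add_right_mono)
      show "ennreal (norm (f (z + of_real A) - f w)) \<le> 2 * deriv_sup_integral f {A<..}"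
        using z A by (intro norm_diff_le_tail[OF hol fin]) auto
    qed
    finally show "ennreal (norm (?u z)) \<le> \<dots>" .
  qed
  have B0: "B0_norm ?u = deriv_sup_integral f {A<..}"
  proof -
    have "deriv ?u z = deriv (\<lambda>z. f (z + of_real A)) z" if "z \<in> RHP" for z
      using deriv_diff[OF field_differentiable_RHP[OF holomorphic_on_RHP_shift[OF hol A(1)] that]
          field_differentiable_const[of c]] by simp
    then have "B0_norm ?u = B0_norm (\<lambda>z. f (z + of_real A))" by (rule B0_norm_cong_deriv)
    then show ?thesis using B0_norm_shift[OF hol A(1)] by simp
  qed
  have "B_norm ?u \<le> 2 * deriv_sup_integral f {A<..} + ennreal (norm (f w - c))
      + deriv_sup_integral f {A<..}"
    unfolding B_norm_def by (rule add_mono[OF sup eq_refl[OF B0]])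
  also have "\<dots> = 3 * deriv_sup_integral f {A<..} + ennreal (norm (f w - c))"
  proof -
    have "3 * deriv_sup_integral f {A<..} = 2 * deriv_sup_integral f {A<..} + deriv_sup_integral f {A<..}"
      using distrib_right[of 2 1 "deriv_sup_integral f {A<..}"] by simp
    then show ?thesis by (simp add: ac_simps)
  qed
  finally show ?thesis .
qed

lemma norm_deriv_shift_diff_le:
  assumes hol: "h holomorphic_on RHP" and bound: "\<And>w. w \<in> RHP \<Longrightarrow> norm (h w) \<le> M"
    and b: "0 < b" "b \<le> A" and z: "z \<in> RHP"
  shows "norm (deriv (\<lambda>z. h (z + of_real b) - h (z + of_real A)) z) \<le> 8 * M * (A - b) / (Re z + b)\<^sup>2"
proof -
  have "deriv (\<lambda>z. h (z + of_real b) - h (z + of_real A)) z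
      = deriv (\<lambda>z. h (z + of_real b)) z - deriv (\<lambda>z. h (z + of_real A)) z"
    using z b by (intro deriv_diff field_differentiable_RHP holomorphic_on_RHP_shift hol) auto
  also have "\<dots> = deriv h (z + of_real b) - deriv h (z + of_real A)"
    using z b by (simp add: deriv_RHP_shift[OF hol])
  moreover have "norm (deriv h (z + of_real b) - deriv h (z + of_real A))
      \<le> 8 * M / (Re z + b)\<^sup>2 * norm ((z + of_real b) - (z + of_real A))"
    using z b by (intro norm_deriv_diff_le_bounded[OF hol bound]) auto
  ultimately have "norm (deriv (\<lambda>z. h (z + of_real b) - h (z + of_real A)) z)
      \<le> 8 * M / (Re z + b)\<^sup>2 * norm ((z + of_real b) - (z + of_real A))"
    by simp
  also have "norm ((z + of_real b) - (z + of_real A)) = A - b"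
  proof -
    have "(z + of_real b) - (z + of_real A) = - of_real (A - b)" by simp
    then show ?thesis
      using b by (simp only: norm_minus_cancel norm_of_real abs_of_nonneg diff_ge_0_iff_ge)
  qed
  finally show ?thesis by simp
qed

lemma B_norm_shift_diff_le:
  assumes hol: "h holomorphic_on RHP" and bound: "\<And>w. w \<in> RHP \<Longrightarrow> norm (h w) \<le> M"
    and b: "0 < b" "b \<le> A"
  shows "B_norm (\<lambda>z. h (z + of_real b) - h (z + of_real A)) \<le> ennreal (2 * M + 8 * M * (A - b) / b)"
proof -
  let ?u = "\<lambda>z. h (z + of_real b) - h (z + of_real A)"
  have M: "0 \<le> M" using bound[of 1] by (simp add: order_trans[OF norm_ge_zero])
  have "sup_norm ?u \<le> ennreal (2 * M)"
  proof (rule sup_norm_le)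
    fix z assume "z \<in> RHP"
    then have "norm (h (z + of_real b)) \<le> M" "norm (h (z + of_real A)) \<le> M"
      using b by (auto intro: bound)
    then show "norm (?u z) \<le> 2 * M"
      using norm_triangle_ineq4[of "h (z + of_real b)" "h (z + of_real A)"] by linarith
  qed
  moreover have "B0_norm ?u \<le> ennreal (8 * M * (A - b) / b)"
  proof -
    have "deriv_sup ?u \<alpha> \<le> ennreal (8 * M * (A - b) / (\<alpha> + b)\<^sup>2)" if "0 < \<alpha>" for \<alpha>
      using norm_deriv_shift_diff_le[OF hol bound b, of "Complex \<alpha> _"] that
      by (intro deriv_sup_le) simp
    then have "B0_norm ?u \<le> (\<integral>\<^sup>+ \<alpha>. ennreal (8 * M * (A - b) / (\<alpha> + b)\<^sup>2) * indicator {0<..} \<alpha> \<partial>lborel)"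
      by (rule B0_norm_le_nn_integral)
    also have "\<dots> \<le> ennreal (8 * M * (A - b) / b)"
      using b M by (intro nn_integral_inverse_square_shift) auto
    finally show ?thesis .
  qed
  ultimately have "B_norm ?u \<le> ennreal (2 * M) + ennreal (8 * M * (A - b) / b)"
    unfolding B_norm_def by (rule add_mono)
  then show ?thesis using M b by (simp add: ennreal_plus)
qed

lemma deriv_sub_shift:
  assumes hol: "f holomorphic_on RHP" and "0 \<le> b" "z \<in> RHP"
  shows "deriv (\<lambda>z. f z - f (z + of_real b)) z = deriv f z - deriv f (z + of_real b)"
proof -
  have "deriv (\<lambda>z. f z - f (z + of_real b)) z = deriv f z - deriv (\<lambda>z. f (z + of_real b)) z"
    using assms by (intro deriv_diff field_differentiable_RHP holomorphic_on_RHP_shift hol) auto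
  then show ?thesis using assms by (simp add: deriv_RHP_shift)
qed

lemma sup_norm_sub_shift_le:
  assumes hol: "f holomorphic_on RHP" and bound: "\<And>w. w \<in> RHP \<Longrightarrow> norm (f w) \<le> M"
    and b: "0 < b" "b \<le> d"
  shows "sup_norm (\<lambda>z. f z - f (z + of_real b))
    \<le> ennreal (2 * b * M / d) + deriv_sup_integral f {0<..<2 * d}"
  unfolding sup_norm_def
proof (rule SUP_least)
  fix z assume z: "z \<in> RHP"
  show "ennreal (norm (f z - f (z + of_real b))) \<le> ennreal (2 * b * M / d) + deriv_sup_integral f {0<..<2 * d}"
  proof (cases "d \<le> Re z")
    case True
    have "norm (f z - f (z + of_real b)) \<le> 2 * M / d * norm (z - (z + of_real b))"
      using True b by (intro norm_diff_le_bounded[OF hol bound]) auto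
    also have "\<dots> = 2 * b * M / d" using b by simp
    finally show ?thesis by (simp add: add_increasing2 ennreal_leI)
  next
    case False
    have "Complex (Re z + b) (Im z) = z + of_real b" by (simp add: complex_eq_iff)
    then have "ennreal (norm (f (z + of_real b) - f z)) \<le> deriv_sup_integral f {Re z..Re z + b}"
      using norm_diff_horizontal_le[OF hol, of "Re z" "Re z + b" "Im z"] z b by simp
    also have "\<dots> \<le> deriv_sup_integral f {0<..<2 * d}"
      using False z b by (intro deriv_sup_integral_mono) auto
    finally show ?thesis by (simp add: norm_minus_commute[of "f z"] add_increasing)
  qed
qed

lemma deriv_sup_sub_shift_le_bounded:
  assumes hol: "f holomorphic_on RHP" and bound: "\<And>w. w \<in> RHP \<Longrightarrow> norm (f w) \<le> M"
    and b: "0 \<le> b" and \<alpha>: "0 < \<alpha>"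
  shows "deriv_sup (\<lambda>z. f z - f (z + of_real b)) \<alpha> \<le> ennreal (8 * b * M / \<alpha>\<^sup>2)"
proof (rule deriv_sup_le)
  fix \<beta>
  let ?z = "Complex \<alpha> \<beta>"
  have "norm (deriv f ?z - deriv f (?z + of_real b)) \<le> 8 * M / \<alpha>\<^sup>2 * norm (?z - (?z + of_real b))"
    using \<alpha> b by (intro norm_deriv_diff_le_bounded[OF hol bound]) auto
  also have "\<dots> = 8 * b * M / \<alpha>\<^sup>2" using b by simp
  finally show "norm (deriv (\<lambda>z. f z - f (z + of_real b)) ?z) \<le> 8 * b * M / \<alpha>\<^sup>2"
    using \<alpha> b by (simp add: deriv_sub_shift[OF hol])
qed

lemma deriv_sup_sub_shift_le:
  assumes hol: "f holomorphic_on RHP" and b: "0 \<le> b" and \<alpha>: "0 < \<alpha>"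
  shows "deriv_sup (\<lambda>z. f z - f (z + of_real b)) \<alpha> \<le> deriv_sup f \<alpha> + deriv_sup f (\<alpha> + b)"
  unfolding deriv_sup_def
proof (rule SUP_least)
  fix \<beta>
  let ?z = "Complex \<alpha> \<beta>"
  have "?z + of_real b = Complex (\<alpha> + b) \<beta>" by (simp add: complex_eq_iff)
  then have "norm (deriv (\<lambda>z. f z - f (z + of_real b)) ?z)
      \<le> norm (deriv f ?z) + norm (deriv f (Complex (\<alpha> + b) \<beta>))"
    using \<alpha> b deriv_sub_shift[OF hol, of b ?z] norm_triangle_ineq4 by simp
  then have "ennreal (norm (deriv (\<lambda>z. f z - f (z + of_real b)) ?z))
      \<le> ennreal (norm (deriv f ?z)) + ennreal (norm (deriv f (Complex (\<alpha> + b) \<beta>)))"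
    by (simp add: ennreal_plus[symmetric] ennreal_leI del: ennreal_plus)
  then show "ennreal (norm (deriv (\<lambda>z. f z - f (z + of_real b)) ?z))
      \<le> (SUP \<beta>. ennreal (norm (deriv f (Complex \<alpha> \<beta>))))
        + (SUP \<beta>. ennreal (norm (deriv f (Complex (\<alpha> + b) \<beta>))))"
    by (rule order_trans) (intro add_mono SUP_upper; simp)
qed

lemma deriv_sup_sub_shift_le_split:
  assumes hol: "f holomorphic_on RHP" and bound: "\<And>w. w \<in> RHP \<Longrightarrow> norm (f w) \<le> M"
    and b: "0 < b" "b \<le> d"
  shows "deriv_sup (\<lambda>z. f z - f (z + of_real b)) \<alpha> * indicator {0<..} \<alpha>
    \<le> ennreal (8 * b * M / \<alpha>\<^sup>2) * indicator {d..} \<alpha> + deriv_sup f \<alpha> * indicator {0<..<d} \<alpha>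
      + deriv_sup f (\<alpha> + b) * indicator {b<..<d + b} (\<alpha> + b)"
proof (cases "d \<le> \<alpha>")
  case True
  then have "deriv_sup (\<lambda>z. f z - f (z + of_real b)) \<alpha> * indicator {0<..} \<alpha>
      \<le> ennreal (8 * b * M / \<alpha>\<^sup>2) * indicator {d..} \<alpha>"
    using deriv_sup_sub_shift_le_bounded[OF hol bound, of b \<alpha>] b by simp
  then show ?thesis
    by (rule order_trans[OF _ add_increasing2[OF zero_le add_increasing2[OF zero_le order_refl]]])
next
  case False
  then have "deriv_sup (\<lambda>z. f z - f (z + of_real b)) \<alpha> * indicator {0<..} \<alpha>
      \<le> deriv_sup f \<alpha> * indicator {0<..<d} \<alpha> + deriv_sup f (\<alpha> + b) * indicator {b<..<d + b} (\<alpha> + b)"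
    using deriv_sup_sub_shift_le[OF hol, of b \<alpha>] b by (cases "0 < \<alpha>") simp_all
  then show ?thesis
    unfolding add.assoc by (rule order_trans[OF _ add_increasing[OF zero_le order_refl]])
qed

lemma B0_norm_sub_shift_le:
  assumes hol: "f holomorphic_on RHP" and bound: "\<And>w. w \<in> RHP \<Longrightarrow> norm (f w) \<le> M"
    and b: "0 < b" "b \<le> d"
  shows "B0_norm (\<lambda>z. f z - f (z + of_real b))
    \<le> ennreal (8 * b * M / d) + 2 * deriv_sup_integral f {0<..<2 * d}"
proof -
  have M: "0 \<le> M" using bound[of 1] by (simp add: order_trans[OF norm_ge_zero])
  define G1 where "G1 = (\<lambda>t. ennreal (8 * b * M / t\<^sup>2) * indicator {d..} t)"
  define G2 where "G2 = (\<lambda>t. deriv_sup f t * indicator {0<..<d} t)"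
  define G3 where "G3 = (\<lambda>t. deriv_sup f t * indicator {b<..<d + b} t)"
  have G1: "G1 \<in> borel_measurable borel" unfolding G1_def by measurable
  have G2: "G2 \<in> borel_measurable borel" and G3: "G3 \<in> borel_measurable borel"
    unfolding G2_def G3_def using b by (auto intro: borel_measurable_deriv_sup_indicator[OF hol])
  have "B0_norm (\<lambda>z. f z - f (z + of_real b)) \<le> (\<integral>\<^sup>+ \<alpha>. G1 \<alpha> + G2 \<alpha> + G3 (\<alpha> + b) \<partial>lborel)"
    unfolding B0_norm_eq_deriv_sup_integral deriv_sup_integral_def G1_def G2_def G3_def
    by (intro nn_integral_mono deriv_sup_sub_shift_le_split[OF hol bound b])
  also have "\<dots> = integral\<^sup>N lborel G1 + integral\<^sup>N lborel G2 + integral\<^sup>N lborel G3"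
  proof -
    have "(\<lambda>\<alpha>. G3 (\<alpha> + b)) \<in> borel_measurable borel"
      by (rule measurable_compose[OF _ G3]) simp
    then show ?thesis
      using G1 G2 nn_integral_lborel_translate[OF G3, of b]
      by (subst nn_integral_add; simp add: nn_integral_add)
  qed
  also have "\<dots> \<le> ennreal (8 * b * M / d) + deriv_sup_integral f {0<..<2 * d}
      + deriv_sup_integral f {0<..<2 * d}"
  proof (intro add_mono)
    show "integral\<^sup>N lborel G1 \<le> ennreal (8 * b * M / d)"
      unfolding G1_def using b M by (simp add: nn_integral_inverse_square)
    show "integral\<^sup>N lborel G2 \<le> deriv_sup_integral f {0<..<2 * d}"
      unfolding G2_def deriv_sup_integral_def[symmetric] by (intro deriv_sup_integral_mono) auto
    show "integral\<^sup>N lborel G3 \<le> deriv_sup_integral f {0<..<2 * d}"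
      unfolding G3_def deriv_sup_integral_def[symmetric] using b by (intro deriv_sup_integral_mono) auto
  qed
  finally show ?thesis by (simp only: mult_2 add.assoc)
qed

lemma B_norm_sub_shift_le:
  assumes hol: "f holomorphic_on RHP" and bound: "\<And>w. w \<in> RHP \<Longrightarrow> norm (f w) \<le> M"
    and b: "0 < b" "b \<le> d"
  shows "B_norm (\<lambda>z. f z - f (z + of_real b))
    \<le> ennreal (10 * (b * M / d)) + 3 * deriv_sup_integral f {0<..<2 * d}"
proof -
  let ?I = "deriv_sup_integral f {0<..<2 * d}"
  have M: "0 \<le> M" using bound[of 1] by (simp add: order_trans[OF norm_ge_zero])
  have "B_norm (\<lambda>z. f z - f (z + of_real b))
      \<le> (ennreal (2 * b * M / d) + ?I) + (ennreal (8 * b * M / d) + 2 * ?I)"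
    unfolding B_norm_def
    by (intro add_mono sup_norm_sub_shift_le[OF hol bound b] B0_norm_sub_shift_le[OF hol bound b])
  also have "\<dots> = (ennreal (2 * b * M / d) + ennreal (8 * b * M / d)) + 3 * ?I"
    using distrib_right[of 2 1 ?I] by (simp add: ac_simps)
  also have "ennreal (2 * b * M / d) + ennreal (8 * b * M / d) = ennreal (10 * (b * M / d))"
    using b M by (simp add: ennreal_plus[symmetric] del: ennreal_plus)
  finally show ?thesis .
qed

lemma exists_B_norm_sub_shift_le:
  assumes hol: "f holomorphic_on RHP" and fin: "B0_norm f < \<infinity>" and e: "0 < e"
  shows "\<exists>b>0. B_norm (\<lambda>z. f z - f (z + of_real b)) \<le> ennreal e"
proof -
  obtain M where bound: "\<And>w. w \<in> RHP \<Longrightarrow> norm (f w) \<le> M"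
    using B0_norm_finite_imp_bounded[OF hol fin] by blast
  have M: "0 \<le> M" using bound[of 1] by (simp add: order_trans[OF norm_ge_zero])
  obtain d0 where d0: "0 < d0" "deriv_sup_integral f {0<..<d0} < ennreal (e / 6)"
    using deriv_sup_integral_initial_small[OF hol fin, of "ennreal (e / 6)"] e by auto
  define d where "d = d0 / 2"
  define b where "b = min d (e * d / (20 * (M + 1)))"
  have d: "0 < d" "2 * d = d0" using d0 by (auto simp: d_def)
  have b: "0 < b" "b \<le> d" using d e M by (auto simp: b_def)
  have "b \<le> e * d / (20 * (M + 1))" unfolding b_def by (rule min.cobounded2)
  then have "b * (20 * (M + 1)) \<le> e * d" using M by (simp add: pos_le_divide_eq)
  then have "20 * (b * M) \<le> e * d" using b by (simp add: algebra_simps)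
  then have "10 * (b * M / d) \<le> e / 2" using d by (simp add: pos_divide_le_eq)
  then have "ennreal (10 * (b * M / d)) \<le> ennreal (e / 2)" by (rule ennreal_leI)
  moreover have "3 * deriv_sup_integral f {0<..<2 * d} \<le> ennreal (e / 2)"
  proof -
    have "3 * deriv_sup_integral f {0<..<2 * d} \<le> 3 * ennreal (e / 6)"
      using d0 d by (intro mult_left_mono) auto
    also have "\<dots> = ennreal (e / 2)" using ennreal_mult[of 3 "e / 6"] e by simp
    finally show ?thesis .
  qed
  ultimately have "B_norm (\<lambda>z. f z - f (z + of_real b)) \<le> ennreal (e / 2) + ennreal (e / 2)"
    using B_norm_sub_shift_le[OF hol bound b] by (meson add_mono order_trans)
  also have "\<dots> = ennreal e" using e by (simp add: ennreal_plus[symmetric] del: ennreal_plus)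
  finally show ?thesis using b by blast
qed

lemma exists_B_norm_shift_diff_le:
  assumes hol_Y: "\<And>g. g \<in> Y \<Longrightarrow> g holomorphic_on RHP" and hol: "f holomorphic_on RHP"
    and approx: "\<And>\<delta>. 0 < \<delta> \<Longrightarrow> \<exists>g\<in>Y. sup_norm (\<lambda>z. f z - g z) < ennreal \<delta>"
    and b: "0 < b" "b \<le> A" and e: "0 < e"
  shows "\<exists>g\<in>Y. B_norm (\<lambda>z. (f (z + of_real b) - g (z + of_real b)) - (f (z + of_real A) - g (z + of_real A)))
    \<le> ennreal e"
proof -
  define K where "K = 2 + 8 * ((A - b) / b)"
  have K: "0 < K" using b by (simp add: K_def add_pos_nonneg)
  obtain g where g: "g \<in> Y" "sup_norm (\<lambda>z. f z - g z) < ennreal (e / K)"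
    using approx[of "e / K"] e K by auto
  have "(\<lambda>z. f z - g z) holomorphic_on RHP"
    using hol hol_Y[OF g(1)] by (intro holomorphic_intros)
  moreover have "norm (f z - g z) \<le> e / K" if "z \<in> RHP" for z
    using g(2) that by (rule norm_le_if_sup_norm_less)
  ultimately have "B_norm (\<lambda>z. (f (z + of_real b) - g (z + of_real b)) - (f (z + of_real A) - g (z + of_real A)))
      \<le> ennreal (2 * (e / K) + 8 * (e / K) * (A - b) / b)"
    using B_norm_shift_diff_le[of "\<lambda>z. f z - g z" "e / K" b A] b by simp
  also have "2 * (e / K) + 8 * (e / K) * (A - b) / b = e / K * K"
  proof -
    have "8 * (e / K) * (A - b) / b = e / K * (8 * ((A - b) / b))" by simp
    then show ?thesis unfolding K_def by (simp only: distrib_left) simp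
  qed
  also have "\<dots> = e" using K by simp
  finally show ?thesis using g(1) by blast
qed

lemma is_subspace_add_diff:
  assumes Y: "is_subspace Y" and "p \<in> Y" "q \<in> Y" "r \<in> Y"
  shows "(\<lambda>z. p z + (q z - r z)) \<in> Y"
proof -
  have add: "(\<lambda>z. u z + v z) \<in> Y" if "u \<in> Y" "v \<in> Y" for u v
    using Y that by (simp add: is_subspace_def)
  have "(\<lambda>z. (-1) * r z) \<in> Y" using Y \<open>r \<in> Y\<close> unfolding is_subspace_def by blast
  then have "(\<lambda>z. q z + (-1) * r z) \<in> Y" using add \<open>q \<in> Y\<close> by blast
  then have "(\<lambda>z. p z + (q z + (-1) * r z)) \<in> Y" using add \<open>p \<in> Y\<close> by blast
  then show ?thesis by simp
qed

lemma exists_B_norm_shift_sub_const_le: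
  assumes hol: "f holomorphic_on RHP" and fin: "B0_norm f < \<infinity>"
    and const_approx: "\<And>A \<eta>. 0 < \<eta> \<Longrightarrow> \<exists>c w. const_fun c \<in> Y \<and> A < Re w \<and> norm (f w - c) < \<eta>"
    and A0: "0 \<le> A0" and e: "0 < e"
  shows "\<exists>A\<ge>A0. \<exists>c. const_fun c \<in> Y \<and> B_norm (\<lambda>z. f (z + of_real A) - c) \<le> ennreal e"
proof -
  obtain A where A: "A0 \<le> A" "deriv_sup_integral f {A<..} < ennreal (e / 4)"
    using deriv_sup_integral_tail_small[OF hol fin, of "ennreal (e / 4)" A0] e by auto
  obtain c w where cw: "const_fun c \<in> Y" "A < Re w" "norm (f w - c) < e / 4"
    using const_approx[of "e / 4" A] e by auto
  have "B_norm (\<lambda>z. f (z + of_real A) - c)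
      \<le> 3 * deriv_sup_integral f {A<..} + ennreal (norm (f w - c))"
    using A0 A cw by (intro B_norm_shift_sub_const_le[OF hol fin]) auto
  also have "\<dots> \<le> 3 * ennreal (e / 4) + ennreal (e / 4)"
    using A(2) cw(3) by (intro add_mono mult_left_mono ennreal_leI) auto
  also have "3 * ennreal (e / 4) = ennreal (3 * (e / 4))"
    using ennreal_mult[of 3 "e / 4"] e by simp
  finally have "B_norm (\<lambda>z. f (z + of_real A) - c) \<le> ennreal e"
    using e by (simp add: ennreal_plus[symmetric] del: ennreal_plus)
  then show ?thesis using A(1) cw(1) by blast
qed

lemma B_norm_sub_shift_combination_le:
  assumes hol: "f holomorphic_on RHP" and hol_g: "g holomorphic_on RHP" and "0 \<le> b" "0 \<le> A"
  shows "B_norm (\<lambda>z. f z - (const_fun c z + (shift b g z - shift A g z)))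
    \<le> B_norm (\<lambda>z. f z - f (z + of_real b)) + (B_norm (\<lambda>z. f (z + of_real A) - c)
      + B_norm (\<lambda>z. (f (z + of_real b) - g (z + of_real b)) - (f (z + of_real A) - g (z + of_real A))))"
    (is "_ \<le> B_norm ?u1 + (B_norm ?u2 + B_norm ?u3)")
proof -
  have hol1: "?u1 holomorphic_on RHP" and hol23: "(\<lambda>z. ?u2 z + ?u3 z) holomorphic_on RHP"
    and hol2: "?u2 holomorphic_on RHP" and hol3: "?u3 holomorphic_on RHP"
    using assms by (auto intro!: holomorphic_intros holomorphic_on_RHP_shift)
  have "f z - (const_fun c z + (shift b g z - shift A g z)) = ?u1 z + (?u2 z + ?u3 z)"
    if "z \<in> RHP" for z
    using that by (simp add: const_fun_def shift_def)
  then have "B_norm (\<lambda>z. f z - (const_fun c z + (shift b g z - shift A g z)))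
      \<le> B_norm ?u1 + B_norm (\<lambda>z. ?u2 z + ?u3 z)"
    by (rule B_norm_add_le[OF hol1 hol23])
  also have "\<dots> \<le> B_norm ?u1 + (B_norm ?u2 + B_norm ?u3)"
    by (intro add_left_mono B_norm_add_le[OF hol2 hol3]) simp
  finally show ?thesis .
qed

lemma exists_B_norm_approximation:
  assumes hol_Y: "\<And>g. g \<in> Y \<Longrightarrow> g holomorphic_on RHP" and Y: "is_subspace Y" "shift_invariant Y"
    and hol: "f holomorphic_on RHP" and fin: "B0_norm f < \<infinity>"
    and approx: "\<And>\<delta>. 0 < \<delta> \<Longrightarrow> \<exists>g\<in>Y. sup_norm (\<lambda>z. f z - g z) < ennreal \<delta>"
    and const_approx: "\<And>A \<eta>. 0 < \<eta> \<Longrightarrow> \<exists>c w. const_fun c \<in> Y \<and> A < Re w \<and> norm (f w - c) < \<eta>"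
    and \<epsilon>: "0 < \<epsilon>"
  shows "\<exists>g\<in>Y. B_norm (\<lambda>z. f z - g z) < ennreal \<epsilon>"
proof -
  define e where "e = \<epsilon> / 4"
  have e: "0 < e" using \<epsilon> by (simp add: e_def)
  obtain b where b: "0 < b" and B1: "B_norm (\<lambda>z. f z - f (z + of_real b)) \<le> ennreal e"
    using exists_B_norm_sub_shift_le[OF hol fin e] by blast
  obtain A c where A: "b \<le> A" and c: "const_fun c \<in> Y"
    and B2: "B_norm (\<lambda>z. f (z + of_real A) - c) \<le> ennreal e"
    using exists_B_norm_shift_sub_const_le[OF hol fin const_approx _ e, of b] b by auto
  obtain g where g: "g \<in> Y" and B3: "B_norm (\<lambda>z. (f (z + of_real b) - g (z + of_real b))
      - (f (z + of_real A) - g (z + of_real A))) \<le> ennreal e"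
    using exists_B_norm_shift_diff_le[OF hol_Y hol approx b A e] by blast
  have "(\<lambda>z. const_fun c z + (shift b g z - shift A g z)) \<in> Y"
    using Y b A g c by (intro is_subspace_add_diff) (auto simp: shift_invariant_def)
  moreover have "B_norm (\<lambda>z. f z - (const_fun c z + (shift b g z - shift A g z)))
      \<le> ennreal e + (ennreal e + ennreal e)"
    using B_norm_sub_shift_combination_le[OF hol hol_Y[OF g], of b A c] b A B1 B2 B3
    by (meson add_mono order_trans less_imp_le)
  moreover have "ennreal e + (ennreal e + ennreal e) < ennreal \<epsilon>"
    using e by (simp add: e_def ennreal_plus[symmetric] ennreal_less_iff del: ennreal_plus)
  ultimately show ?thesis by (meson le_less_trans)
qed

lemma B_closure_subset_Hinf_closure:
  assumes "S \<subseteq> Bsp"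
  shows "B_closure_in S Y \<subseteq> S \<inter> Hinf_closure Y"
proof
  fix f assume f: "f \<in> B_closure_in S Y"
  then have "f \<in> Hinf" using assms Bsp_subset_Hinf by (auto simp: B_closure_in_def)
  moreover have "\<exists>g\<in>Y. sup_norm (\<lambda>z. f z - g z) < ennreal \<epsilon>" if \<epsilon>: "0 < \<epsilon>" for \<epsilon>
  proof -
    obtain g where "g \<in> Y" "B_norm (\<lambda>z. f z - g z) < ennreal \<epsilon>"
      using f \<epsilon> unfolding B_closure_in_def by blast
    moreover have "sup_norm (\<lambda>z. f z - g z) \<le> B_norm (\<lambda>z. f z - g z)"
      by (simp add: B_norm_def)
    ultimately show ?thesis using le_less_trans by blast
  qed
  ultimately show "f \<in> S \<inter> Hinf_closure Y"
    using f by (simp add: B_closure_in_def Hinf_closure_def)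
qed

lemma Hinf_closure_subset_B_closure:
  assumes S: "S \<subseteq> Bsp" and Y: "Y \<subseteq> Bsp" "is_subspace Y" "shift_invariant Y"
    and const_approx: "\<And>f A \<eta>. f \<in> S \<Longrightarrow> 0 < \<eta> \<Longrightarrow>
      \<exists>c w. const_fun c \<in> Y \<and> A < Re w \<and> norm (f w - c) < \<eta>"
  shows "S \<inter> Hinf_closure Y \<subseteq> B_closure_in S Y"
proof
  fix f assume f: "f \<in> S \<inter> Hinf_closure Y"
  have "\<exists>g\<in>Y. B_norm (\<lambda>z. f z - g z) < ennreal \<epsilon>" if "0 < \<epsilon>" for \<epsilon>
  proof (rule exists_B_norm_approximation[OF _ Y(2,3) _ _ _ const_approx that])
    show "g holomorphic_on RHP" if "g \<in> Y" for g
      using that Y(1) by (auto simp: Bsp_def on_RHP_def)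
    show "f holomorphic_on RHP" "B0_norm f < \<infinity>"
      using f S by (auto simp: Bsp_def on_RHP_def)
    show "\<exists>g\<in>Y. sup_norm (\<lambda>z. f z - g z) < ennreal \<delta>" if "0 < \<delta>" for \<delta>
      using f that by (auto simp: Hinf_closure_def)
  qed (use f in auto)
  then show "f \<in> B_closure_in S Y" using f by (simp add: B_closure_in_def)
qed

lemma B_closure_eq_Hinf_closure:
  assumes S: "S \<subseteq> Bsp" and Y: "Y \<subseteq> Bsp" "is_subspace Y" "shift_invariant Y"
    and const_approx: "\<And>f A \<eta>. f \<in> S \<Longrightarrow> 0 < \<eta> \<Longrightarrow>
      \<exists>c w. const_fun c \<in> Y \<and> A < Re w \<and> norm (f w - c) < \<eta>"
  shows "B_closure_in S Y = S \<inter> Hinf_closure Y"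
  using B_closure_subset_Hinf_closure[OF S] Hinf_closure_subset_B_closure[OF S Y const_approx]
  by (rule equalityI)

lemma B0sp_small_far_right:
  assumes "f \<in> B0sp" "0 < \<eta>"
  shows "\<exists>w. A < Re w \<and> norm (f w) < \<eta>"
proof -
  have "\<forall>\<^sub>F z in filtercomap Re at_top. dist (f z) 0 < \<eta>"
    using assms by (simp add: B0sp_def tendsto_iff)
  then obtain N where N: "\<And>z. N \<le> Re z \<Longrightarrow> norm (f z) < \<eta>"
    by (auto simp: eventually_filtercomap_at_top_linorder)
  show ?thesis
    using N[of "of_real (max N A + 1)"] by (intro exI[of _ "of_real (max N A + 1)"]) auto
qed

theorem mainTheorem6:
  shows "(\<forall>Y. Y \<subseteq> B0sp \<and> is_subspace Y \<and> shift_invariant Y \<longrightarrow>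
            B_closure_in B0sp Y = B0sp \<inter> Hinf_closure Y)
       \<and> (\<forall>Z. Z \<subseteq> Bsp \<and> is_subspace Z \<and> shift_invariant Z \<and> (\<forall>c. const_fun c \<in> Z) \<longrightarrow>
            B_closure_in Bsp Z = Bsp \<inter> Hinf_closure Z)"
proof (intro conjI allI impI)
  fix Y assume Y: "Y \<subseteq> B0sp \<and> is_subspace Y \<and> shift_invariant Y"
  have B0sp: "B0sp \<subseteq> Bsp" by (auto simp: B0sp_def)
  have "const_fun 0 = (\<lambda>z. 0)" by (simp add: const_fun_def fun_eq_iff)
  then have "const_fun 0 \<in> Y" using Y by (simp add: is_subspace_def)
  then have "\<exists>c w. const_fun c \<in> Y \<and> A < Re w \<and> norm (f w - c) < \<eta>"
    if "f \<in> B0sp" "0 < \<eta>" for f A \<eta>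
    using B0sp_small_far_right[OF that, of A] by (metis diff_zero)
  then show "B_closure_in B0sp Y = B0sp \<inter> Hinf_closure Y"
    using Y B0sp by (intro B_closure_eq_Hinf_closure) auto
next
  fix Z assume Z: "Z \<subseteq> Bsp \<and> is_subspace Z \<and> shift_invariant Z \<and> (\<forall>c. const_fun c \<in> Z)"
  then have "\<exists>c w. const_fun c \<in> Z \<and> A < Re w \<and> norm (f w - c) < \<eta>" if "0 < \<eta>" for f A \<eta>
    using that by (intro exI[of _ "f (of_real (A + 1))"] exI[of _ "of_real (A + 1)"]) auto
  then show "B_closure_in Bsp Z = Bsp \<inter> Hinf_closure Z"
    using Z by (intro B_closure_eq_Hinf_closure) auto
qed

end
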